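(* Let $\mathbf p=(p(n))_{n\ge 0}$ be a critical reproduction law, and suppose that its tail satisfies $\bar F(n)=n^{-\alpha}\ell(n)$ for all $n\ge1$, where $\ell$ is slowly varying and $\alpha>2$. Let $\varphi:(0,1)\to\mathbb{R}_+$ be an asymptotic inverse of $\bar F$, i.e. $\bar F(\varphi(\varepsilon))\sim\varepsilon$ as $\varepsilon\to0+$. Let $\sigma^2\in(0,\infty)$ be the variance of $\mathbf p$. Then for every $x>0$, $$\lim_{k\to\infty}\mathbb{P}\big(X^{\ast}_k< x\,\varphi(k^{-2})\big)=\exp\Big(-\frac{\sqrt2}{\sigma}\,x^{-\alpha/2}\Big).$$
   Context: $\mathbf p=(p(n))_{n\in\mathbb{N}}$ is a probability measure on the nonnegative integers, viewed as the law of the number of children of an individual; it is critical, meaning $\sum_{n\ge0}np(n)=1$, and $\mathbf p\neq\delta_1$. Its tail distribution function is $\bar F(n)=\sum_{i=n+1}^\infty p(i)$, and its variance is $\sigma^2=\sum_{n\ge0}n^2p(n)-1$. Consider a Galton–Watson process with reproduction law $\mathbf p$ started from $k\ge1$ ancestors; $T_k$ denotes the total population size (total number of individuals ever born, ancestors included), and for $i=1,\dots,T_k$, $X_i$ denotes the number of children of the $i$-th individual, individuals being enumerated by some arbitrary procedure (e.g. breadth-first search). The maximal offspring is $X^\ast_k=\max\{X_i:1\le i\le T_k\}$. Under the regular variation hypothesis such an asymptotic inverse $\varphi$ exists (it varies regularly at $0+$ with index $-1/\alpha$ and may be chosen nonincreasing). *)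

theory Defs
  imports "HOL-Probability.Probability"
begin

definition critical_law :: "nat pmf \<Rightarrow> bool" where
  "critical_law p \<longleftrightarrow> summable (\<lambda>n. real n * pmf p n)
      \<and> (\<Sum>n. real n * pmf p n) = 1 \<and> p \<noteq> return_pmf 1"

definition tail_fun :: "nat pmf \<Rightarrow> real \<Rightarrow> real" where
  "tail_fun p x = measure_pmf.prob p {i. real i > x}"

definition slowly_varying :: "(real \<Rightarrow> real) \<Rightarrow> bool" where
  "slowly_varying l \<longleftrightarrow> l \<in> borel_measurable borel
     \<and> (\<forall>\<^sub>F x in at_top. l x > 0)
     \<and> (\<forall>c>0. ((\<lambda>x. l (c * x) / l x) \<longlongrightarrow> 1) at_top)"

text \<open>Lukasiewicz coding of a Galton--Watson forest with k roots: the list xs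
  of offspring numbers in breadth-first order is the offspring sequence of a
  (finite) forest with k trees iff the partial sums
  k + sum_{i<m} (xs!i - 1) are positive for m < length xs and zero for
  m = length xs.  The total population size T_k is length xs.\<close>
definition luk_path :: "nat \<Rightarrow> nat list \<Rightarrow> nat \<Rightarrow> int" where
  "luk_path k xs m = int k + (\<Sum>i<m. int (xs ! i) - 1)"

definition lukasiewicz :: "nat \<Rightarrow> nat list \<Rightarrow> bool" where
  "lukasiewicz k xs \<longleftrightarrow> xs \<noteq> []
     \<and> (\<forall>m<length xs. luk_path k xs m > 0)
     \<and> luk_path k xs (length xs) = 0"

text \<open>P(X*_k < y) for the Galton--Watson process with law p started from k
  ancestors: the forest has offspring sequence xs (BFS order) with probability
  prod_i p(xs!i); X*_k is the maximum of the entries of xs.  (The event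
  {T_k < infinity} is included; it has probability 1 for critical laws.)\<close>
definition GW_max_lt_prob :: "nat pmf \<Rightarrow> nat \<Rightarrow> real \<Rightarrow> real" where
  "GW_max_lt_prob p k y =
     infsum (\<lambda>xs. prod_list (map (pmf p) xs))
       {xs. lukasiewicz k xs \<and> Max (set xs) < y}"

end

theory Submission
  imports Defs "HOL-Real_Asymp.Real_Asymp"
begin

text \<open>Along the Lukasiewicz path of a forest, the event that every individual has fewer than
  \<open>y\<close> children factorises over the \<open>k\<close> trees: \<open>P(X*_k < y) = q^k\<close>, where \<open>q = q(y)\<close> solves
  the fixpoint equation \<open>q = \<Sum>_{n<y} p(n) q^n\<close>.  Subtracting the critical identity
  \<open>\<Sum> p(n) (1 - n u) = 1 - u\<close> with \<open>u = 1 - q\<close> gives \<open>u^2 g(u) = \<Sum>_{n\<ge>y} p(n) q^n\<close>,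
  where \<open>g(u) \<rightarrow> \<sigma>^2/2\<close> as \<open>u \<rightarrow> 0\<close>.  Finite variance forces \<open>y u \<rightarrow> 0\<close>, so \<open>q^n \<approx> 1\<close> for
  \<open>n\<close> of order \<open>y\<close>, and regular variation of the tail makes the right-hand side asymptotic
  to \<open>P(X \<ge> y)\<close>: \<open>u(y)^2 \<sim> (2/\<sigma>^2) P(X \<ge> y)\<close>.  For \<open>y_k = x \<phi>(k^-2)\<close>, regular variation also
  turns \<open>P(X > \<phi>(k^-2)) \<sim> k^-2\<close> into \<open>k^2 P(X \<ge> y_k) \<rightarrow> x^-\<alpha>\<close>; hence
  \<open>k u(y_k) \<rightarrow> (\<surd>2/\<sigma>) x^(-\<alpha>/2)\<close> and \<open>q(y_k)^k \<rightarrow> exp (-(\<surd>2/\<sigma>) x^(-\<alpha>/2))\<close>.\<close>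

section \<open>Lukasiewicz paths and the fixpoint equation\<close>

lemma luk_path_0 [simp]: "luk_path k xs 0 = int k"
  by (simp add: luk_path_def)

lemma luk_path_Cons_Suc:
  assumes "k + n \<ge> 1"
  shows "luk_path k (n # rs) (Suc m) = luk_path (k + n - 1) rs m"
  using assms unfolding luk_path_def by (subst sum.lessThan_Suc_shift) simp

lemma not_lukasiewicz_Nil [simp]: "\<not> lukasiewicz k []"
  by (simp add: lukasiewicz_def)

lemma lukasiewicz_Cons:
  "lukasiewicz k (n # rs) \<longleftrightarrow>
     k \<ge> 1 \<and> (if k + n = 1 then rs = [] else lukasiewicz (k + n - 1) rs)"
proof (cases "k \<ge> 1")
  case False
  then show ?thesis unfolding lukasiewicz_def by (auto intro!: exI[of _ 0])
next
  case True
  have pos: "(\<forall>m<length (n # rs). luk_path k (n # rs) m > 0) \<longleftrightarrow>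
             (\<forall>m<length rs. luk_path (k + n - 1) rs m > 0)"
    using True by (auto simp: less_Suc_eq_0_disj luk_path_Cons_Suc)
  have last: "luk_path k (n # rs) (length (n # rs)) = luk_path (k + n - 1) rs (length rs)"
    using True by (simp add: luk_path_Cons_Suc)
  show ?thesis
    using True pos last unfolding lukasiewicz_def by (cases rs) (auto simp: luk_path_def)
qed

lemma lukasiewicz_add_iff:
  assumes "a \<ge> 1" "b \<ge> 1"
  shows "lukasiewicz (a + b) xs \<longleftrightarrow> (\<exists>ys zs. xs = ys @ zs \<and> lukasiewicz a ys \<and> lukasiewicz b zs)"
  using assms(1)
proof (induction xs arbitrary: a)
  case Nil
  then show ?case by simp
next
  case (Cons n rs)
  have split_first: "(\<exists>ys zs. n # rs = ys @ zs \<and> lukasiewicz a ys \<and> lukasiewicz b zs) \<longleftrightarrow>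
      (\<exists>ys zs. rs = ys @ zs \<and> lukasiewicz a (n # ys) \<and> lukasiewicz b zs)"
    by (auto simp: Cons_eq_append_conv)
  show ?case
  proof (cases "a + n = 1")
    case True
    then have "a = 1" "n = 0" using Cons.prems by auto
    then show ?thesis using assms(2) unfolding split_first by (auto simp: lukasiewicz_Cons)
  next
    case False
    then have "lukasiewicz (a + b) (n # rs) \<longleftrightarrow> lukasiewicz ((a + n - 1) + b) rs"
      using Cons.prems assms(2) by (simp add: lukasiewicz_Cons algebra_simps)
    then show ?thesis
      using False Cons.prems Cons.IH[of "a + n - 1"] unfolding split_first
      by (simp add: lukasiewicz_Cons)
  qed
qed

lemma lukasiewicz_append_unique:
  assumes "lukasiewicz a ys" "lukasiewicz a ys'" "ys @ zs = ys' @ zs'"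
  shows "ys = ys' \<and> zs = zs'"
  using assms
proof (induction ys arbitrary: a ys')
  case Nil
  then show ?case by simp
next
  case (Cons n r)
  then obtain r' where "ys' = n # r'" "r @ zs = r' @ zs'"
    by (cases ys') auto
  with Cons show ?case by (auto simp: lukasiewicz_Cons split: if_splits)
qed

definition forest_weight :: "nat pmf \<Rightarrow> nat list \<Rightarrow> real" where
  "forest_weight p xs = prod_list (map (pmf p) xs)"

lemma forest_weight_nonneg: "forest_weight p xs \<ge> 0"
  unfolding forest_weight_def by (induction xs) auto

lemma forest_weight_Nil [simp]: "forest_weight p [] = 1"
  and forest_weight_Cons [simp]: "forest_weight p (n # xs) = pmf p n * forest_weight p xs"
  and forest_weight_append: "forest_weight p (xs @ ys) = forest_weight p xs * forest_weight p ys"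
  by (simp_all add: forest_weight_def)

definition bounded_lukasiewicz :: "nat \<Rightarrow> nat \<Rightarrow> nat \<Rightarrow> nat list set" where
  "bounded_lukasiewicz k N M = {xs. lukasiewicz k xs \<and> length xs \<le> N \<and> set xs \<subseteq> {..M}}"

lemma finite_bounded_lukasiewicz: "finite (bounded_lukasiewicz k N M)"
  by (rule finite_subset[OF _ finite_lists_length_le[of "{..M}" N]])
     (auto simp: bounded_lukasiewicz_def)

lemma sum_forest_weight_bounded_lukasiewicz:
  "k \<ge> 1 \<Longrightarrow> sum (forest_weight p) (bounded_lukasiewicz k N M) \<le> 1"
proof (induction N arbitrary: k)
  case 0
  have "bounded_lukasiewicz k 0 M = {}" by (auto simp: bounded_lukasiewicz_def)
  then show ?case by simp
next
  case (Suc N)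
  define D where "D n = (if k + n = 1 then {[]} else bounded_lukasiewicz (k + n - 1) N M)" for n
  have eq: "bounded_lukasiewicz k (Suc N) M = (\<lambda>(n, rs). n # rs) ` Sigma {..M} D"
  proof (intro equalityI subsetI)
    fix xs assume xs: "xs \<in> bounded_lukasiewicz k (Suc N) M"
    then obtain n rs where "xs = n # rs"
      unfolding bounded_lukasiewicz_def by (cases xs) auto
    with xs Suc.prems show "xs \<in> (\<lambda>(n, rs). n # rs) ` Sigma {..M} D"
      unfolding bounded_lukasiewicz_def D_def by (force simp: lukasiewicz_Cons split: if_splits)
  qed (use Suc.prems in \<open>auto simp: bounded_lukasiewicz_def D_def lukasiewicz_Cons split: if_splits\<close>)
  have inj: "inj_on (\<lambda>(n, rs). n # rs) (Sigma {..M} D)"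
    by (auto simp: inj_on_def)
  have fibre: "sum (forest_weight p) (D n) \<le> 1" for n
    unfolding D_def using Suc.IH Suc.prems by auto
  have "sum (forest_weight p) (bounded_lukasiewicz k (Suc N) M) =
        (\<Sum>(n, rs)\<in>Sigma {..M} D. pmf p n * forest_weight p rs)"
    unfolding eq by (subst sum.reindex[OF inj]) (simp add: case_prod_unfold)
  also have "\<dots> = (\<Sum>n\<le>M. pmf p n * sum (forest_weight p) (D n))"
    by (subst sum.Sigma[symmetric]) (auto simp: D_def finite_bounded_lukasiewicz sum_distrib_left)
  also have "\<dots> \<le> (\<Sum>n\<le>M. pmf p n)"
    by (intro sum_mono mult_left_le) (auto simp: fibre)
  also have "\<dots> \<le> 1"
    by (metis finite_atMost measure_measure_pmf_finite measure_pmf.subprob_measure_le_1)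
  finally show ?case .
qed

lemma forest_weight_summable_on_lukasiewicz:
  assumes "k \<ge> 1" "A \<subseteq> {xs. lukasiewicz k xs}"
  shows "forest_weight p summable_on A" "infsum (forest_weight p) A \<le> 1"
proof -
  have le1: "sum (forest_weight p) F \<le> 1" if "finite F" "F \<subseteq> A" for F
  proof -
    have "F \<subseteq> bounded_lukasiewicz k (Max (length ` F)) (Max (\<Union>xs\<in>F. set xs))"
      using that assms(2) unfolding bounded_lukasiewicz_def by (auto intro!: Max_ge)
    then have "sum (forest_weight p) F \<le>
        sum (forest_weight p) (bounded_lukasiewicz k (Max (length ` F)) (Max (\<Union>xs\<in>F. set xs)))"
      by (intro sum_mono2 finite_bounded_lukasiewicz) (auto simp: forest_weight_nonneg)
    also have "\<dots> \<le> 1"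
      using sum_forest_weight_bounded_lukasiewicz assms(1) by blast
    finally show ?thesis .
  qed
  show summable: "forest_weight p summable_on A"
    by (rule nonneg_bounded_partial_sums_imp_summable_on[where C=1])
       (auto simp: forest_weight_nonneg le1 eventually_finite_subsets_at_top_weakI)
  show "infsum (forest_weight p) A \<le> 1"
    by (rule infsum_le_finite_sums[OF summable]) (use le1 in blast)
qed

lemma has_sum_Sigma_nonneg:
  fixes f :: "'a \<times> 'b \<Rightarrow> real"
  assumes fibres: "\<And>x. x \<in> A \<Longrightarrow> ((\<lambda>y. f (x, y)) has_sum g x) (B x)"
    and total: "(g has_sum S) A"
    and nonneg: "\<And>x y. x \<in> A \<Longrightarrow> y \<in> B x \<Longrightarrow> f (x, y) \<ge> 0"
  shows "(f has_sum S) (Sigma A B)"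
  using fibres total summable_on_SigmaI[OF fibres _ nonneg]
  by (intro has_sum_SigmaI) (auto dest: has_sum_imp_summable)

definition forests_below :: "nat \<Rightarrow> real \<Rightarrow> nat list set" where
  "forests_below k y = {xs. lukasiewicz k xs \<and> (\<forall>a\<in>set xs. real a < y)}"

lemma GW_max_lt_prob_eq_infsum: "GW_max_lt_prob p k y = infsum (forest_weight p) (forests_below k y)"
proof -
  have "real (Max (set xs)) < y \<longleftrightarrow> (\<forall>a\<in>set xs. real a < y)" if "lukasiewicz k xs" for xs
  proof -
    from that have "xs \<noteq> []" by (auto simp: lukasiewicz_def)
    then show ?thesis by (auto intro: le_less_trans[rotated])
  qed
  then show ?thesis
    unfolding GW_max_lt_prob_def forests_below_def forest_weight_def by metis
qed

lemma GW_max_lt_prob_has_sum: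
  "k \<ge> 1 \<Longrightarrow> (forest_weight p has_sum GW_max_lt_prob p k y) (forests_below k y)"
  unfolding GW_max_lt_prob_eq_infsum
  by (rule has_sum_infsum, rule forest_weight_summable_on_lukasiewicz)
     (auto simp: forests_below_def)

lemma GW_max_lt_prob_nonneg: "GW_max_lt_prob p k y \<ge> 0"
  and GW_max_lt_prob_le_1: "k \<ge> 1 \<Longrightarrow> GW_max_lt_prob p k y \<le> 1"
  unfolding GW_max_lt_prob_eq_infsum
  by (simp add: forest_weight_nonneg infsum_nonneg)
     (rule forest_weight_summable_on_lukasiewicz; auto simp: forests_below_def)

lemma GW_max_lt_prob_Suc:
  assumes "k \<ge> 1"
  shows "GW_max_lt_prob p (Suc k) y = GW_max_lt_prob p 1 y * GW_max_lt_prob p k y"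
proof -
  have eq: "forests_below (Suc k) y =
      (\<lambda>(a, b). a @ b) ` Sigma (forests_below 1 y) (\<lambda>_. forests_below k y)"
  proof (intro equalityI subsetI)
    fix xs assume "xs \<in> forests_below (Suc k) y"
    then obtain ys zs where "xs = ys @ zs" "lukasiewicz 1 ys" "lukasiewicz k zs" "\<forall>a\<in>set xs. real a < y"
      using lukasiewicz_add_iff[of 1 k xs] assms unfolding forests_below_def by auto
    then show "xs \<in> (\<lambda>(a, b). a @ b) ` Sigma (forests_below 1 y) (\<lambda>_. forests_below k y)"
      unfolding forests_below_def by force
  next
    fix xs assume "xs \<in> (\<lambda>(a, b). a @ b) ` Sigma (forests_below 1 y) (\<lambda>_. forests_below k y)"
    then obtain a b where "xs = a @ b" "a \<in> forests_below 1 y" "b \<in> forests_below k y"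
      by auto
    then show "xs \<in> forests_below (Suc k) y"
      using lukasiewicz_add_iff[of 1 k xs] assms unfolding forests_below_def by auto
  qed
  have inj: "inj_on (\<lambda>(a, b). a @ b) (Sigma (forests_below 1 y) (\<lambda>_. forests_below k y))"
    unfolding inj_on_def forests_below_def by (force dest: lukasiewicz_append_unique)
  have "((\<lambda>(a, b). forest_weight p a * forest_weight p b) has_sum
        GW_max_lt_prob p 1 y * GW_max_lt_prob p k y) (Sigma (forests_below 1 y) (\<lambda>_. forests_below k y))"
  proof -
    have "((\<lambda>b. forest_weight p a * forest_weight p b) has_sum forest_weight p a * GW_max_lt_prob p k y)
        (forests_below k y)" for a
      using GW_max_lt_prob_has_sum[OF assms] by (rule has_sum_cmult_right)
    moreover have "((\<lambda>a. forest_weight p a * GW_max_lt_prob p k y) has_sum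
        GW_max_lt_prob p 1 y * GW_max_lt_prob p k y) (forests_below 1 y)"
      using GW_max_lt_prob_has_sum[of 1] by (intro has_sum_cmult_left) simp
    ultimately show ?thesis
      by (intro has_sum_Sigma_nonneg) (auto simp: forest_weight_nonneg)
  qed
  then have "(forest_weight p has_sum GW_max_lt_prob p 1 y * GW_max_lt_prob p k y) (forests_below (Suc k) y)"
    unfolding eq has_sum_reindex[OF inj] by (simp add: comp_def case_prod_unfold forest_weight_append)
  from has_sum_unique[OF GW_max_lt_prob_has_sum this] show ?thesis by simp
qed

lemma GW_max_lt_prob_power: "k \<ge> 1 \<Longrightarrow> GW_max_lt_prob p k y = GW_max_lt_prob p 1 y ^ k"
  by (induction k rule: dec_induct) (simp_all add: GW_max_lt_prob_Suc)

lemma finite_nat_below_real: "finite {n::nat. real n < y}"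
  by (rule finite_subset[of _ "{..nat \<lceil>y\<rceil>}"]) (auto, linarith)

lemma GW_max_lt_prob_fixpoint:
  "GW_max_lt_prob p 1 y = (\<Sum>n | real n < y. pmf p n * GW_max_lt_prob p 1 y ^ n)"
proof -
  define I where "I = {n::nat. real n < y}"
  define D where "D n = (if n = 0 then {[]} else forests_below n y)" for n
  have eq: "forests_below 1 y = (\<lambda>(n, rs). n # rs) ` Sigma I D"
  proof (intro equalityI subsetI)
    fix xs assume xs: "xs \<in> forests_below 1 y"
    then obtain n rs where "xs = n # rs"
      unfolding forests_below_def by (cases xs) auto
    with xs show "xs \<in> (\<lambda>(n, rs). n # rs) ` Sigma I D"
      unfolding forests_below_def D_def I_def by (force simp: lukasiewicz_Cons)
  qed (auto simp: forests_below_def D_def I_def lukasiewicz_Cons split: if_splits)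
  have inj: "inj_on (\<lambda>(n, rs). n # rs) (Sigma I D)"
    by (auto simp: inj_on_def)
  have fibre: "(forest_weight p has_sum GW_max_lt_prob p 1 y ^ n) (D n)" for n
    using GW_max_lt_prob_has_sum[of n] GW_max_lt_prob_power[of n] has_sum_finite[of "{[]}" "forest_weight p"]
    by (cases "n = 0") (simp_all add: D_def)
  have "((\<lambda>(n, rs). pmf p n * forest_weight p rs) has_sum
          (\<Sum>n\<in>I. pmf p n * GW_max_lt_prob p 1 y ^ n)) (Sigma I D)"
    using has_sum_cmult_right[OF fibre] has_sum_finite[OF finite_nat_below_real[of y]]
    by (intro has_sum_Sigma_nonneg[where g = "\<lambda>n. pmf p n * GW_max_lt_prob p 1 y ^ n"])
       (auto simp: I_def forest_weight_nonneg)
  then have "(forest_weight p has_sum (\<Sum>n\<in>I. pmf p n * GW_max_lt_prob p 1 y ^ n)) (forests_below 1 y)"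
    unfolding eq has_sum_reindex[OF inj] by (simp add: comp_def case_prod_unfold)
  from has_sum_unique[OF GW_max_lt_prob_has_sum this] show ?thesis by (simp add: I_def)
qed

section \<open>Tails and the generating function\<close>

lemma tail_fun_antimono: "x \<le> y \<Longrightarrow> tail_fun p y \<le> tail_fun p x"
  unfolding tail_fun_def by (intro measure_pmf.finite_measure_mono) auto

lemma tail_fun_nat_floor:
  assumes "t \<ge> 0"
  shows "tail_fun p (real (nat \<lfloor>t\<rfloor>)) = tail_fun p t"
proof -
  have "real (nat \<lfloor>t\<rfloor>) < real i \<longleftrightarrow> t < real i" for i
    using assms floor_less_iff[of t "int i"] by linarith
  then show ?thesis unfolding tail_fun_def by simp
qed

lemma tail_fun_le_prob_ge: "tail_fun p y \<le> measure_pmf.prob p {n. real n \<ge> y}"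
  unfolding tail_fun_def by (intro measure_pmf.finite_measure_mono) auto

lemma prob_ge_le_tail_fun: "measure_pmf.prob p {n. real n \<ge> y} \<le> tail_fun p (y - 1)"
  unfolding tail_fun_def by (intro measure_pmf.finite_measure_mono) auto

definition second_order_rem :: "real \<Rightarrow> nat \<Rightarrow> real" where
  "second_order_rem u n = (\<Sum>j<n. \<Sum>i<j. (1 - u) ^ i)"

lemma second_order_rem_Suc:
  "second_order_rem u (Suc n) = second_order_rem u n + (\<Sum>i<n. (1 - u) ^ i)"
  by (simp add: second_order_rem_def)

lemma power_eq_second_order_rem: "(1 - u) ^ n - 1 + real n * u = u\<^sup>2 * second_order_rem u n"
proof (induction n)
  case 0
  then show ?case by (simp add: second_order_rem_def)
next
  case (Suc n)
  have geometric: "1 - (1 - u) ^ n = u * (\<Sum>i<n. (1 - u) ^ i)"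
    using one_diff_power_eq[of "1 - u" n] by simp
  have "(1 - u) ^ Suc n - 1 + real (Suc n) * u
        = ((1 - u) ^ n - 1 + real n * u) + u * (1 - (1 - u) ^ n)"
    by (simp add: algebra_simps)
  also have "\<dots> = u\<^sup>2 * second_order_rem u (Suc n)"
    unfolding Suc.IH geometric second_order_rem_Suc by (simp add: algebra_simps power2_eq_square)
  finally show ?case .
qed

lemma second_order_rem_nonneg: "u \<le> 1 \<Longrightarrow> second_order_rem u n \<ge> 0"
  unfolding second_order_rem_def by (intro sum_nonneg) auto

lemma second_order_rem_le: "0 \<le> u \<Longrightarrow> u \<le> 1 \<Longrightarrow> second_order_rem u n \<le> second_order_rem 0 n"
  unfolding second_order_rem_def by (intro sum_mono) (auto intro!: power_le_one)

lemma second_order_rem_ge_1: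
  assumes "u \<le> 1" "n \<ge> 2"
  shows "second_order_rem u n \<ge> 1"
proof -
  have "second_order_rem u n = second_order_rem u 2 + (\<Sum>j\<in>{2..<n}. \<Sum>i<j. (1 - u) ^ i)"
    unfolding second_order_rem_def using assms(2)
    by (metis lessThan_atLeast0 sum.atLeastLessThan_concat zero_le)
  moreover have "(\<Sum>j\<in>{2..<n}. \<Sum>i<j. (1 - u) ^ i) \<ge> 0"
    using assms(1) by (intro sum_nonneg) auto
  ultimately show ?thesis by (simp add: second_order_rem_def numeral_2_eq_2)
qed

lemma second_order_rem_0: "2 * second_order_rem 0 n = (real n)\<^sup>2 - real n"
  by (induction n) (simp_all add: second_order_rem_def power2_eq_square algebra_simps)

lemma second_order_rem_le_square: "second_order_rem 0 n \<le> (real n)\<^sup>2"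
  using second_order_rem_0[of n] zero_le_power2[of "real n"] of_nat_0_le_iff[of n] by linarith

lemma pmf_sums_prob: "(\<lambda>n. if n \<in> A then pmf p n else 0) sums measure_pmf.prob p A"
  using sums_infsetsum_nat[OF pmf_abs_summable] by (simp add: measure_pmf_conv_infsetsum)

lemma pmf_sums_1: "pmf p sums 1"
  using pmf_sums_prob[of UNIV p] by simp

lemma prob_ge_sums: "(\<lambda>n. if y \<le> real n then pmf p n else 0) sums measure_pmf.prob p {n. real n \<ge> y}"
  using pmf_sums_prob[of "{n. real n \<ge> y}" p] by simp

lemma tail_fun_sums: "(\<lambda>n. if x < real n then pmf p n else 0) sums tail_fun p x"
  using pmf_sums_prob[of "{n. real n > x}" p] unfolding tail_fun_def by simp

definition pgf_second_order_rem :: "nat pmf \<Rightarrow> real \<Rightarrow> real" where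
  "pgf_second_order_rem p u = (\<Sum>n. pmf p n * second_order_rem u n)"

lemma summable_pgf_second_order_rem:
  assumes var: "summable (\<lambda>n. (real n)\<^sup>2 * pmf p n)" and u: "0 \<le> u" "u \<le> 1"
  shows "summable (\<lambda>n. pmf p n * second_order_rem u n)"
proof (rule summable_comparison_test'[OF var])
  fix n
  have "second_order_rem u n \<le> (real n)\<^sup>2"
    using second_order_rem_le[OF u, of n] second_order_rem_le_square[of n] by linarith
  then show "norm (pmf p n * second_order_rem u n) \<le> (real n)\<^sup>2 * pmf p n"
    using second_order_rem_nonneg[OF u(2), of n] by (simp add: mult.commute[of "pmf p n"] mult_right_mono)
qed

lemma pgf_second_order_rem_0:
  assumes var: "summable (\<lambda>n. (real n)\<^sup>2 * pmf p n)"
    and mean: "summable (\<lambda>n. real n * pmf p n)" "(\<Sum>n. real n * pmf p n) = 1"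
  shows "2 * pgf_second_order_rem p 0 = (\<Sum>n. (real n)\<^sup>2 * pmf p n) - 1"
proof -
  have "2 * pgf_second_order_rem p 0 = (\<Sum>n. pmf p n * (2 * second_order_rem 0 n))"
    unfolding pgf_second_order_rem_def
    using summable_pgf_second_order_rem[OF var, of 0] by (simp add: suminf_mult[symmetric] ac_simps)
  also have "\<dots> = (\<Sum>n. (real n)\<^sup>2 * pmf p n - real n * pmf p n)"
    unfolding second_order_rem_0 by (simp add: algebra_simps)
  also have "\<dots> = (\<Sum>n. (real n)\<^sup>2 * pmf p n) - (\<Sum>n. real n * pmf p n)"
    using var mean(1) by (rule suminf_diff[symmetric])
  finally show ?thesis using mean(2) by simp
qed

lemma pgf_second_order_rem_ge_pmf:
  assumes var: "summable (\<lambda>n. (real n)\<^sup>2 * pmf p n)" and u: "0 \<le> u" "u \<le> 1"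
    and n0: "n0 \<ge> 2"
  shows "pgf_second_order_rem p u \<ge> pmf p n0"
proof -
  have "pmf p n0 \<le> pmf p n0 * second_order_rem u n0"
    using second_order_rem_ge_1[OF u(2) n0] by (simp add: mult_le_cancel_left1)
  also have "\<dots> \<le> pgf_second_order_rem p u"
    unfolding pgf_second_order_rem_def
    using summable_pgf_second_order_rem[OF var u] second_order_rem_nonneg[OF u(2)]
    by (intro sum_le_suminf[where I = "{n0}", simplified]) auto
  finally show ?thesis .
qed

lemma tendsto_pgf_second_order_rem:
  assumes var: "summable (\<lambda>n. (real n)\<^sup>2 * pmf p n)"
    and u: "(u \<longlongrightarrow> 0) F" "eventually (\<lambda>k. 0 \<le> u k \<and> u k \<le> 1) F" and F: "F \<noteq> bot"
  shows "((\<lambda>k. pgf_second_order_rem p (u k)) \<longlongrightarrow> pgf_second_order_rem p 0) F"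
proof -
  have bound: "eventually (\<lambda>(n, k). norm (pmf p n * second_order_rem (u k) n)
                  \<le> pmf p n * second_order_rem 0 n) (at_top \<times>\<^sub>F F)"
    unfolding eventually_prod_filter
    using u(2) second_order_rem_le second_order_rem_nonneg
    by (intro exI[of _ "\<lambda>_. True"] exI[of _ "\<lambda>k. 0 \<le> u k \<and> u k \<le> 1"]) (auto intro!: mult_left_mono)
  have "((\<lambda>k. pmf p n * second_order_rem (u k) n) \<longlongrightarrow> pmf p n * second_order_rem 0 n) F" for n
    unfolding second_order_rem_def by (intro tendsto_intros u(1))
  from tannerys_theorem[OF this bound summable_pgf_second_order_rem[OF var] F] show ?thesis
    by (simp add: pgf_second_order_rem_def)
qed

definition pgf_above :: "nat pmf \<Rightarrow> real \<Rightarrow> real \<Rightarrow> real" where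
  "pgf_above p y q = (\<Sum>n. if y \<le> real n then pmf p n * q ^ n else 0)"

lemma summable_pgf_above:
  assumes "0 \<le> q" "q \<le> 1"
  shows "summable (\<lambda>n. if y \<le> real n then pmf p n * q ^ n else 0)"
  using assms
  by (intro summable_comparison_test'[OF sums_summable[OF prob_ge_sums[of y p]]])
     (auto intro!: mult_left_le power_le_one)

lemma pgf_above_le_prob_ge:
  assumes "0 \<le> q" "q \<le> 1"
  shows "pgf_above p y q \<le> measure_pmf.prob p {n. real n \<ge> y}"
  unfolding pgf_above_def sums_unique[OF prob_ge_sums[of y p]]
  using assms
  by (intro suminf_le summable_pgf_above sums_summable[OF prob_ge_sums[of y p]])
     (auto intro!: mult_left_le power_le_one)

text \<open>Criticality cancels the first-order term of the generating function at \<open>1\<close>.\<close>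
lemma pgf_second_order_rem_fixpoint:
  assumes mean: "summable (\<lambda>n. real n * pmf p n)" "(\<Sum>n. real n * pmf p n) = 1"
    and var: "summable (\<lambda>n. (real n)\<^sup>2 * pmf p n)"
    and q: "0 \<le> q" "q \<le> 1"
    and fixpoint: "q = (\<Sum>n | real n < y. pmf p n * q ^ n)"
  shows "(1 - q)\<^sup>2 * pgf_second_order_rem p (1 - q) = pgf_above p y q"
proof -
  define u where "u = 1 - q"
  have u: "0 \<le> u" "u \<le> 1" using q by (auto simp: u_def)
  have below: "(\<lambda>n. if real n < y then pmf p n * q ^ n else 0) sums q"
    using sums_If_finite[OF finite_nat_below_real, of y "\<lambda>n. pmf p n * q ^ n"] fixpoint by simp
  have above: "(\<lambda>n. if y \<le> real n then pmf p n * q ^ n else 0) sums pgf_above p y q"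
    unfolding pgf_above_def using summable_pgf_above[OF q] by (rule summable_sums)
  have "(\<lambda>n. pmf p n * q ^ n) = (\<lambda>n. (if real n < y then pmf p n * q ^ n else 0) +
                                          (if y \<le> real n then pmf p n * q ^ n else 0))"
    by auto
  then have "(\<lambda>n. pmf p n * q ^ n) sums (q + pgf_above p y q)"
    using sums_add[OF below above] by simp
  then have "(\<lambda>n. pmf p n * q ^ n - pmf p n + u * (real n * pmf p n)) sums
      (q + pgf_above p y q - 1 + u * 1)"
    using pmf_sums_1 summable_sums[OF mean(1)] mean(2) by (intro sums_add sums_diff sums_mult) auto
  moreover have "pmf p n * q ^ n - pmf p n + u * (real n * pmf p n) =
      u\<^sup>2 * (pmf p n * second_order_rem u n)" for n
  proof -
    have "pmf p n * q ^ n - pmf p n + u * (real n * pmf p n) = pmf p n * ((1 - u) ^ n - 1 + real n * u)"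
      by (simp add: u_def algebra_simps)
    then show ?thesis unfolding power_eq_second_order_rem by simp
  qed
  ultimately have "(\<lambda>n. u\<^sup>2 * (pmf p n * second_order_rem u n)) sums pgf_above p y q"
    by (simp add: u_def)
  moreover have "(\<lambda>n. u\<^sup>2 * (pmf p n * second_order_rem u n)) sums (u\<^sup>2 * pgf_second_order_rem p u)"
    unfolding pgf_second_order_rem_def
    by (intro sums_mult summable_sums summable_pgf_second_order_rem[OF var u])
  ultimately show ?thesis
    using sums_unique2 u_def by blast
qed

lemma one_minus_power_le:
  assumes "0 \<le> q" "q \<le> 1"
  shows "1 - q ^ n \<le> real M * (1 - q) + (if M < n then 1 else 0)"
proof (cases "n \<le> M")
  case True
  have "1 + real n * (q - 1) \<le> (1 + (q - 1)) ^ n"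
    using assms by (intro Bernoulli_inequality) simp
  then have "1 - q ^ n \<le> real n * (1 - q)" by (simp add: algebra_simps)
  also have "\<dots> \<le> real M * (1 - q)" using True assms by (intro mult_right_mono) auto
  finally show ?thesis by simp
next
  case False
  have "0 \<le> q ^ n" "0 \<le> real M * (1 - q)" using assms by simp_all
  with False show ?thesis by simp
qed

lemma prob_ge_minus_pgf_above_le:
  assumes q: "0 \<le> q" "q \<le> 1"
  shows "measure_pmf.prob p {n. real n \<ge> y} - pgf_above p y q
         \<le> real M * (1 - q) * measure_pmf.prob p {n. real n \<ge> y} + tail_fun p (real M)"
proof (rule sums_le)
  show "(\<lambda>n. (if y \<le> real n then pmf p n else 0) - (if y \<le> real n then pmf p n * q ^ n else 0))
      sums (measure_pmf.prob p {n. real n \<ge> y} - pgf_above p y q)"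
    unfolding pgf_above_def using prob_ge_sums summable_pgf_above[OF q]
    by (intro sums_diff summable_sums)
  show "(\<lambda>n. real M * (1 - q) * (if y \<le> real n then pmf p n else 0) + (if real M < real n then pmf p n else 0))
      sums (real M * (1 - q) * measure_pmf.prob p {n. real n \<ge> y} + tail_fun p (real M))"
    by (intro sums_add sums_mult prob_ge_sums tail_fun_sums)
  show "(if y \<le> real n then pmf p n else 0) - (if y \<le> real n then pmf p n * q ^ n else 0)
      \<le> real M * (1 - q) * (if y \<le> real n then pmf p n else 0) + (if real M < real n then pmf p n else 0)"
    for n
    using mult_left_mono[OF one_minus_power_le[OF q, of n M] pmf_nonneg[of p n]]
    by (auto simp: algebra_simps)
qed

section \<open>Regularly varying tails\<close>

lemma filterlim_nat_floor_divide:
  assumes "filterlim t at_top F" "N \<ge> (1::nat)"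
  shows "filterlim (\<lambda>k. nat \<lfloor>t k / real N\<rfloor>) sequentially F"
proof -
  have "filterlim (\<lambda>k. (1 / real N) * t k) at_top F"
    using assms by (intro filterlim_tendsto_pos_mult_at_top[OF tendsto_const]) auto
  then show ?thesis
    by (intro filterlim_compose[OF filterlim_nat_sequentially]
        filterlim_compose[OF filterlim_floor_sequentially]) simp
qed

lemma nat_floor_divide_bounds:
  assumes "t > 0" "N \<ge> (1::nat)"
  shows "real N * real (nat \<lfloor>t / real N\<rfloor>) \<le> t" "t < real N * (real (nat \<lfloor>t / real N\<rfloor>) + 1)"
proof -
  have "real (nat \<lfloor>t / real N\<rfloor>) \<le> t / real N" "t / real N < real (nat \<lfloor>t / real N\<rfloor>) + 1"
    using assms by (simp_all add: of_nat_floor)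
  then show "real N * real (nat \<lfloor>t / real N\<rfloor>) \<le> t" "t < real N * (real (nat \<lfloor>t / real N\<rfloor>) + 1)"
    using assms(2) by (simp_all add: field_simps)
qed

locale regularly_varying_seq =
  fixes R :: "nat \<Rightarrow> real" and \<alpha> :: real
  assumes antimono: "\<And>m n. m \<le> n \<Longrightarrow> R n \<le> R m"
    and pos: "\<And>n. R n > 0"
    and index_pos: "\<alpha> > 0"
    and ratio_tendsto: "\<And>a b. 1 \<le> a \<Longrightarrow> 1 \<le> b \<Longrightarrow>
          ((\<lambda>n. R (a * n) / R (b * n)) \<longlongrightarrow> (real a / real b) powr (-\<alpha>)) sequentially"
begin

lemma eventually_ratio_less:
  assumes j: "filterlim j sequentially F" and ab: "1 \<le> a" "1 \<le> b"
    and c: "(real a / real b) powr (-\<alpha>) < c"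
    and between: "eventually (\<lambda>k. a * j k \<le> m k \<and> n k \<le> b * j k) F"
  shows "eventually (\<lambda>k. R (m k) / R (n k) < c) F"
proof -
  have "eventually (\<lambda>k. R (a * j k) / R (b * j k) < c) F"
    using filterlim_iff[THEN iffD1, OF j, rule_format, OF order_tendstoD(2)[OF ratio_tendsto[OF ab] c]]
    by simp
  with between show ?thesis
  proof eventually_elim
    case (elim k)
    then have "R (m k) / R (n k) \<le> R (a * j k) / R (b * j k)"
      using pos by (intro frac_le antimono) (auto intro: less_imp_le)
    with elim show ?case by simp
  qed
qed

lemma eventually_ratio_greater:
  assumes j: "filterlim j sequentially F" and ab: "1 \<le> a" "1 \<le> b"
    and c: "c < (real a / real b) powr (-\<alpha>)"
    and between: "eventually (\<lambda>k. m k \<le> a * j k \<and> b * j k \<le> n k) F"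
  shows "eventually (\<lambda>k. R (m k) / R (n k) > c) F"
proof -
  have "eventually (\<lambda>k. R (a * j k) / R (b * j k) > c) F"
    using filterlim_iff[THEN iffD1, OF j, rule_format, OF order_tendstoD(1)[OF ratio_tendsto[OF ab] c]]
    by simp
  with between show ?thesis
  proof eventually_elim
    case (elim k)
    then have "R (a * j k) / R (b * j k) \<le> R (m k) / R (n k)"
      using pos by (intro frac_le antimono) (auto intro: less_imp_le)
    with elim show ?case by simp
  qed
qed

text \<open>Monotonicity of \<open>R\<close> reduces arbitrary ratios to integer ones: \<open>\<lfloor>s\<rfloor>\<close> and \<open>\<lfloor>t\<rfloor>\<close> are
  sandwiched between integer multiples \<open>a j\<close> and \<open>(N + 1) j\<close> of \<open>j = \<lfloor>t / N\<rfloor>\<close>.\<close>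
lemma eventually_floor_ratio_less:
  assumes t: "filterlim t at_top F" and s: "((\<lambda>k. s k / t k) \<longlongrightarrow> x) F"
    and z: "0 < z" "z < x" and c: "z powr (-\<alpha>) < c"
  shows "eventually (\<lambda>k. R (nat \<lfloor>s k\<rfloor>) / R (nat \<lfloor>t k\<rfloor>) < c) F"
proof -
  define z' where "z' = (z + x) / 2"
  have z': "z < z'" "z' < x" using z by (auto simp: z'_def)
  define N where "N = nat \<lceil>(1 + z) / (z' - z)\<rceil> + 1"
  have "real N > (1 + z) / (z' - z)" unfolding N_def by linarith
  then have N: "N \<ge> 1" "real N * (z' - z) > 1 + z" using z' by (simp_all add: N_def field_simps)
  define a where "a = nat \<lfloor>z' * real N\<rfloor>"
  have "real a \<ge> z' * real N - 1" unfolding a_def using z' z by linarith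
  then have a: "z * (real N + 1) \<le> real a" "real a \<le> z' * real N"
    using N z' z unfolding a_def by (simp_all add: algebra_simps of_nat_floor)
  have "z * (real N + 1) > 0" using z by simp
  with a have a1: "a \<ge> 1" by (cases a) auto
  have "(real a / real (N + 1)) powr (-\<alpha>) \<le> z powr (-\<alpha>)"
    using a z index_pos by (intro powr_mono2') (auto simp: field_simps)
  with c have ac: "(real a / real (N + 1)) powr (-\<alpha>) < c" by simp
  have "eventually (\<lambda>k. z' < s k / t k \<and> real N * real N + 1 \<le> t k) F"
    using order_tendstoD(1)[OF s z'(2)] t by (auto simp: filterlim_at_top intro: eventually_conj)
  then have between: "eventually (\<lambda>k. a * nat \<lfloor>t k / real N\<rfloor> \<le> nat \<lfloor>s k\<rfloor> \<and>
                              nat \<lfloor>t k\<rfloor> \<le> (N + 1) * nat \<lfloor>t k / real N\<rfloor>) F"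
  proof eventually_elim
    case (elim k)
    define j where "j = nat \<lfloor>t k / real N\<rfloor>"
    have tpos: "t k > 0" using elim mult_nonneg_nonneg[of "real N" "real N"] by linarith
    note j = nat_floor_divide_bounds[OF tpos N(1), folded j_def]
    have "real N \<le> t k / real N" using elim N by (simp add: field_simps)
    then have jN: "N \<le> j" unfolding j_def by (simp add: le_nat_floor)
    have "real (a * j) \<le> z' * (real N * real j)"
      using mult_right_mono[OF a(2), of "real j"] by (simp add: mult.assoc)
    also have "\<dots> \<le> z' * t k" using j z' z by (intro mult_left_mono) auto
    also have "\<dots> \<le> s k" using elim tpos by (simp add: field_simps)
    finally have "a * j \<le> nat \<lfloor>s k\<rfloor>" by (simp add: le_nat_floor)
    moreover have "real N * (real j + 1) \<le> real ((N + 1) * j)" using jN by (simp add: algebra_simps)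
    then have "nat \<lfloor>t k\<rfloor> \<le> (N + 1) * j" using j by linarith
    ultimately show ?case by (simp add: j_def)
  qed
  show ?thesis
    using eventually_ratio_less[OF filterlim_nat_floor_divide[OF t N(1)] a1 _ ac between] by simp
qed

lemma eventually_floor_ratio_greater:
  assumes t: "filterlim t at_top F" and s: "((\<lambda>k. s k / t k) \<longlongrightarrow> x) F"
    and x: "0 < x" "x < w" and c: "c < w powr (-\<alpha>)"
  shows "eventually (\<lambda>k. R (nat \<lfloor>s k\<rfloor>) / R (nat \<lfloor>t k\<rfloor>) > c) F"
proof -
  define z1 where "z1 = x + (w - x) / 3"
  define z2 where "z2 = x + 2 * (w - x) / 3"
  have z: "x < z1" "z1 < z2" "z2 < w" using x unfolding z1_def z2_def by (auto simp: field_simps)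
  define N where "N = nat \<lceil>1 / (w - z2)\<rceil> + 1"
  have "real N > 1 / (w - z2)" unfolding N_def by linarith
  then have N: "N \<ge> 1" "real N * (w - z2) > 1" using z by (simp_all add: N_def field_simps)
  define b where "b = nat \<lceil>z2 * real N\<rceil>"
  have "z2 * real N > 0" using z x N by simp
  then have b: "z2 * real N \<le> real b" "real b \<le> z2 * real N + 1"
    unfolding b_def by linarith+
  with \<open>z2 * real N > 0\<close> have b1: "b \<ge> 1" by (cases b) auto
  have "w powr (-\<alpha>) \<le> (real b / real N) powr (-\<alpha>)"
    using b N b1 index_pos by (intro powr_mono2') (auto simp: field_simps)
  with c have bc: "c < (real b / real N) powr (-\<alpha>)" by simp
  define J where "J = nat \<lceil>z1 / (z2 - z1)\<rceil>"
  have j: "filterlim (\<lambda>k. nat \<lfloor>t k / real N\<rfloor>) sequentially F"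
    by (rule filterlim_nat_floor_divide[OF t N(1)])
  have "eventually (\<lambda>k. J \<le> nat \<lfloor>t k / real N\<rfloor> \<and> s k / t k < z1 \<and> 1 \<le> t k) F"
    using filterlim_iff[THEN iffD1, OF j, rule_format, OF eventually_ge_at_top[of J]]
      order_tendstoD(2)[OF s z(1)] t[unfolded filterlim_at_top, rule_format, of 1]
    by (auto intro: eventually_conj)
  then have between: "eventually (\<lambda>k. nat \<lfloor>s k\<rfloor> \<le> b * nat \<lfloor>t k / real N\<rfloor> \<and>
                                      N * nat \<lfloor>t k / real N\<rfloor> \<le> nat \<lfloor>t k\<rfloor>) F"
  proof eventually_elim
    case (elim k)
    define j where "j = nat \<lfloor>t k / real N\<rfloor>"
    have tpos: "t k > 0" using elim by simp
    note j = nat_floor_divide_bounds[OF tpos N(1), folded j_def]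
    have "real j \<ge> z1 / (z2 - z1)" using elim unfolding J_def j_def by linarith
    then have jJ: "z1 * (real j + 1) \<le> z2 * real j" using z by (simp add: field_simps)
    have "s k \<le> z1 * t k" using elim tpos by (simp add: field_simps)
    also have "\<dots> \<le> real N * (z1 * (real j + 1))" using j z x by (simp add: mult_left_mono)
    also have "\<dots> \<le> real N * (z2 * real j)" using jJ by (intro mult_left_mono) auto
    also have "\<dots> \<le> real b * real j" using mult_right_mono[OF b(1), of "real j"] by (simp add: ac_simps)
    finally have "s k \<le> real (b * j)" by simp
    then have "nat \<lfloor>s k\<rfloor> \<le> b * j" by linarith
    moreover have "N * j \<le> nat \<lfloor>t k\<rfloor>" using j by (simp add: le_nat_floor)
    ultimately show ?case by (simp add: j_def)
  qed
  show ?thesis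
    using eventually_ratio_greater[OF j b1 N(1) bc between] by simp
qed

lemma tendsto_floor_ratio:
  assumes t: "filterlim t at_top F" and s: "((\<lambda>k. s k / t k) \<longlongrightarrow> x) F" and x: "0 < x"
  shows "((\<lambda>k. R (nat \<lfloor>s k\<rfloor>) / R (nat \<lfloor>t k\<rfloor>)) \<longlongrightarrow> x powr (-\<alpha>)) F"
proof -
  have cont: "((\<lambda>z. z powr (-\<alpha>)) \<longlongrightarrow> x powr (-\<alpha>)) (at x)"
    using x by (intro tendsto_intros) auto
  show ?thesis
  proof (rule order_tendstoI)
    fix c assume c: "c > x powr (-\<alpha>)"
    have "((\<lambda>z. z powr (-\<alpha>)) \<longlongrightarrow> x powr (-\<alpha>)) (at_left x)"
      by (rule tendsto_mono[OF at_le cont]) simp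
    then have "eventually (\<lambda>z. z powr (-\<alpha>) < c \<and> z \<in> {0<..<x}) (at_left x)"
      using c eventually_at_left_real[OF x] order_tendstoD(2) by (intro eventually_conj) auto
    then obtain z where "z powr (-\<alpha>) < c" "z \<in> {0<..<x}"
      using eventually_happens[of _ "at_left x"] trivial_limit_at_left_real by blast
    then show "eventually (\<lambda>k. R (nat \<lfloor>s k\<rfloor>) / R (nat \<lfloor>t k\<rfloor>) < c) F"
      by (intro eventually_floor_ratio_less[OF t s]) auto
  next
    fix c assume c: "c < x powr (-\<alpha>)"
    have "((\<lambda>z. z powr (-\<alpha>)) \<longlongrightarrow> x powr (-\<alpha>)) (at_right x)"
      by (rule tendsto_mono[OF at_le cont]) simp
    then have "eventually (\<lambda>z. c < z powr (-\<alpha>) \<and> x < z) (at_right x)"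
      by (intro eventually_conj order_tendstoD(1)[OF _ c]) (simp_all add: eventually_at_filter)
    then obtain w where "c < w powr (-\<alpha>)" "x < w"
      using eventually_happens[of _ "at_right x"] trivial_limit_at_right_real by blast
    then show "eventually (\<lambda>k. R (nat \<lfloor>s k\<rfloor>) / R (nat \<lfloor>t k\<rfloor>) > c) F"
      by (intro eventually_floor_ratio_greater[OF t s x])
  qed
qed

lemma filterlim_at_top_if_tendsto_0:
  fixes t :: "'a \<Rightarrow> real"
  assumes "((\<lambda>k. R (nat \<lfloor>t k\<rfloor>)) \<longlongrightarrow> 0) F"
  shows "filterlim t at_top F"
  unfolding filterlim_at_top
proof
  fix Z :: real
  have "eventually (\<lambda>k. R (nat \<lfloor>t k\<rfloor>) < R (nat \<lceil>Z\<rceil>)) F"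
    using order_tendstoD(2)[OF assms pos] .
  then show "eventually (\<lambda>k. Z \<le> t k) F"
  proof eventually_elim
    case (elim k)
    then have "\<not> nat \<lfloor>t k\<rfloor> \<le> nat \<lceil>Z\<rceil>"
      using antimono[of "nat \<lfloor>t k\<rfloor>" "nat \<lceil>Z\<rceil>"] by auto
    then have "\<lceil>Z\<rceil> < \<lfloor>t k\<rfloor>" by linarith
    then show ?case by linarith
  qed
qed

end

lemma regularly_varying_seq_tail_fun:
  fixes l :: "real \<Rightarrow> real"
  assumes tail: "\<And>n::nat. n \<ge> 1 \<Longrightarrow> tail_fun p (real n) = real n powr (-\<alpha>) * l (real n)"
    and sv: "slowly_varying l" and \<alpha>: "\<alpha> > 0"
  shows "regularly_varying_seq (\<lambda>n. tail_fun p (real n)) \<alpha>"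
proof
  fix n :: nat
  from sv obtain X where X: "\<And>x. x \<ge> X \<Longrightarrow> l x > 0"
    unfolding slowly_varying_def eventually_at_top_linorder by blast
  define m where "m = max n (max 1 (nat \<lceil>X\<rceil>))"
  have m: "m \<ge> 1" "real m \<ge> X" "n \<le> m" unfolding m_def by (auto, linarith)
  have "0 < tail_fun p (real m)" using tail[OF m(1)] X[OF m(2)] m(1) by simp
  also have "\<dots> \<le> tail_fun p (real n)" using m(3) by (simp add: tail_fun_antimono)
  finally show "tail_fun p (real n) > 0" .
next
  fix a b :: nat assume a: "1 \<le> a" and b: "1 \<le> b"
  have "real a / real b > 0" using a b by simp
  then have "((\<lambda>x. l ((real a / real b) * x) / l x) \<longlongrightarrow> 1) at_top"
    using sv unfolding slowly_varying_def by blast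
  moreover have "filterlim (\<lambda>n::nat. real b * real n) at_top sequentially"
    by (rule filterlim_tendsto_pos_mult_at_top[OF tendsto_const _ filterlim_real_sequentially])
       (use b in simp)
  ultimately have "((\<lambda>n. l (real (a * n)) / l (real (b * n))) \<longlongrightarrow> 1) sequentially"
    using filterlim_compose b by (fastforce simp: mult.assoc[symmetric])
  then have "((\<lambda>n. (real a / real b) powr (-\<alpha>) * (l (real (a * n)) / l (real (b * n))))
          \<longlongrightarrow> (real a / real b) powr (-\<alpha>)) sequentially"
    using tendsto_mult_left by fastforce
  moreover have "eventually (\<lambda>n. (real a / real b) powr (-\<alpha>) * (l (real (a * n)) / l (real (b * n)))
        = tail_fun p (real (a * n)) / tail_fun p (real (b * n))) sequentially"
    using eventually_ge_at_top[of "1::nat"]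
  proof eventually_elim
    case (elim n)
    have an: "a * n \<ge> 1" "b * n \<ge> 1" using a b elim by auto
    have "tail_fun p (real (a * n)) / tail_fun p (real (b * n))
        = (real (a * n) powr (-\<alpha>) / real (b * n) powr (-\<alpha>)) * (l (real (a * n)) / l (real (b * n)))"
      using tail[OF an(1)] tail[OF an(2)] by simp
    also have "real (a * n) powr (-\<alpha>) / real (b * n) powr (-\<alpha>) = (real a / real b) powr (-\<alpha>)"
      using elim by (simp add: powr_divide[symmetric])
    finally show ?case by simp
  qed
  ultimately show "((\<lambda>n. tail_fun p (real (a * n)) / tail_fun p (real (b * n)))
          \<longlongrightarrow> (real a / real b) powr (-\<alpha>)) sequentially"
    using tendsto_cong by force
qed (auto simp: tail_fun_antimono \<alpha>)

section \<open>Asymptotics\<close>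

lemma critical_law_ex_pmf_ge_2:
  assumes "critical_law p"
  shows "\<exists>n\<ge>2. pmf p n > 0"
proof (rule ccontr)
  assume "\<not> ?thesis"
  then have zero: "pmf p n = 0" if "n \<noteq> 0" "n \<noteq> 1" for n
    using that pmf_nonneg[of p n] by (metis One_nat_def less_2_cases not_le order_less_le)
  have "(\<Sum>n. real n * pmf p n) = (\<Sum>n\<in>{1}. real n * pmf p n)"
  proof (rule suminf_finite)
    show "real n * pmf p n = 0" if "n \<notin> {1}" for n
      using that zero[of n] by (cases "n = 0") auto
  qed simp
  then have "measure_pmf.prob p {1} = 1"
    using assms by (simp add: critical_law_def measure_pmf_single)
  then have "set_pmf p \<subseteq> {1}"
    by (subst (asm) measure_pmf.prob_eq_1) (auto simp: AE_measure_pmf_iff)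
  then show False
    using assms by (simp add: critical_law_def set_pmf_subset_singleton)
qed

lemma tendsto_one_minus_power:
  fixes u :: "nat \<Rightarrow> real"
  assumes nonneg: "\<And>k. u k \<ge> 0" and lim: "((\<lambda>k. real k * u k) \<longlongrightarrow> L) sequentially"
  shows "((\<lambda>k. (1 - u k) ^ k) \<longlongrightarrow> exp (- L)) sequentially"
proof -
  have "((\<lambda>k. (real k * u k) * (1 / real k)) \<longlongrightarrow> 0) sequentially"
    using tendsto_mult[OF lim lim_1_over_n] by simp
  then have u: "(u \<longlongrightarrow> 0) sequentially"
    by (rule Lim_transform_eventually)
       (use eventually_ge_at_top[of "1::nat"] in \<open>eventually_elim, simp\<close>)
  have small: "eventually (\<lambda>k. u k < 1/2) sequentially"
    using order_tendstoD(2)[OF u, of "1/2"] by simp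
  text \<open>\<open>- u / (1 - u) \<le> ln (1 - u) \<le> - u\<close>, so \<open>k ln (1 - u k)\<close> is squeezed to \<open>-L\<close>.\<close>
  have lower: "eventually (\<lambda>k. - (real k * u k) / (1 - u k) \<le> real k * ln (1 - u k)) sequentially"
    using small
  proof eventually_elim
    case (elim k)
    have "ln (1 / (1 - u k)) \<le> 1 / (1 - u k) - 1"
      using ln_le_minus_one[of "1 / (1 - u k)"] elim by simp
    moreover have "ln (1 / (1 - u k)) = - ln (1 - u k)" "1 / (1 - u k) - 1 = u k / (1 - u k)"
      using elim by (simp_all add: ln_div field_simps)
    ultimately have "real k * (- (u k / (1 - u k))) \<le> real k * ln (1 - u k)"
      by (intro mult_left_mono) auto
    then show ?case by simp
  qed
  have upper: "eventually (\<lambda>k. real k * ln (1 - u k) \<le> - (real k * u k)) sequentially"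
    using small
  proof eventually_elim
    case (elim k)
    have "ln (1 - u k) \<le> - u k" using ln_le_minus_one[of "1 - u k"] elim by simp
    then have "real k * ln (1 - u k) \<le> real k * (- u k)" by (intro mult_left_mono) auto
    then show ?case by simp
  qed
  have "((\<lambda>k. - (real k * u k) / (1 - u k)) \<longlongrightarrow> - L / (1 - 0)) sequentially"
    by (intro tendsto_intros lim u) simp
  moreover have "((\<lambda>k. - (real k * u k)) \<longlongrightarrow> - L) sequentially"
    by (intro tendsto_intros lim)
  ultimately have "((\<lambda>k. real k * ln (1 - u k)) \<longlongrightarrow> - L) sequentially"
    using tendsto_sandwich[OF lower upper] by simp
  then have "((\<lambda>k. exp (real k * ln (1 - u k))) \<longlongrightarrow> exp (- L)) sequentially"
    by (rule tendsto_exp)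
  moreover have "eventually (\<lambda>k. exp (real k * ln (1 - u k)) = (1 - u k) ^ k) sequentially"
    using small by eventually_elim (simp add: exp_of_nat_mult)
  ultimately show ?thesis using tendsto_cong by force
qed

lemma square_prob_ge_tendsto_0:
  assumes var: "summable (\<lambda>n. (real n)\<^sup>2 * pmf p n)"
  shows "((\<lambda>y. y\<^sup>2 * measure_pmf.prob p {n. real n \<ge> y}) \<longlongrightarrow> 0) at_top"
proof -
  define T where "T y = (\<Sum>n. if y \<le> real n then (real n)\<^sup>2 * pmf p n else 0)" for y
  have "((\<lambda>y. if y \<le> real n then (real n)\<^sup>2 * pmf p n else 0) \<longlongrightarrow> 0) at_top" for n
  proof (rule tendsto_eventually)
    show "eventually (\<lambda>y. (if y \<le> real n then (real n)\<^sup>2 * pmf p n else 0) = 0) at_top"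
      using eventually_gt_at_top[of "real n"] by eventually_elim auto
  qed
  moreover have "eventually (\<lambda>(n, y). norm (if y \<le> real n then (real n)\<^sup>2 * pmf p n else 0)
                   \<le> (real n)\<^sup>2 * pmf p n) (at_top \<times>\<^sub>F at_top)"
    by (intro always_eventually) auto
  ultimately have T0: "(T \<longlongrightarrow> 0) at_top"
    unfolding T_def using tannerys_theorem[OF _ _ var] by fastforce
  have "eventually (\<lambda>y. y\<^sup>2 * measure_pmf.prob p {n. real n \<ge> y} \<le> T y) at_top"
    using eventually_ge_at_top[of 0]
  proof eventually_elim
    case (elim y)
    have "(\<lambda>n. y\<^sup>2 * (if y \<le> real n then pmf p n else 0)) sums (y\<^sup>2 * measure_pmf.prob p {n. real n \<ge> y})"
      by (intro sums_mult prob_ge_sums)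
    moreover have "(\<lambda>n. if y \<le> real n then (real n)\<^sup>2 * pmf p n else 0) sums T y"
      unfolding T_def by (intro summable_sums summable_comparison_test'[OF var]) auto
    ultimately show ?case
      by (rule sums_le[rotated]) (use elim in \<open>auto intro!: mult_right_mono power_mono\<close>)
  qed
  then show ?thesis
    by (intro tendsto_sandwich[OF _ _ tendsto_const T0]) (auto intro!: always_eventually)
qed

lemma prob_ge_pos:
  assumes "\<And>n. tail_fun p (real n) > 0"
  shows "measure_pmf.prob p {n. real n \<ge> y} > 0"
proof -
  have "y \<le> real (nat \<lceil>y\<rceil>)" by linarith
  then have "tail_fun p (real (nat \<lceil>y\<rceil>)) \<le> measure_pmf.prob p {n. real n \<ge> y}"
    using tail_fun_antimono tail_fun_le_prob_ge order_trans by blast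
  with assms[of "nat \<lceil>y\<rceil>"] show ?thesis by simp
qed

lemma one_minus_pgf_above_div_prob_ge_le:
  assumes q: "0 \<le> q" "q \<le> 1" and M: "y \<le> real M" "tail_fun p (real M) > 0"
  shows "1 - pgf_above p y q / measure_pmf.prob p {n. real n \<ge> y}
         \<le> real K * (real M * (1 - q)) + tail_fun p (real (K * M)) / tail_fun p (real M)"
proof -
  define P where "P = measure_pmf.prob p {n. real n \<ge> y}"
  have "tail_fun p (real M) \<le> P"
    unfolding P_def using tail_fun_antimono[OF M(1)] tail_fun_le_prob_ge by (rule order_trans)
  with M(2) have P: "P > 0" "tail_fun p (real (K * M)) / P \<le> tail_fun p (real (K * M)) / tail_fun p (real M)"
    by (auto intro!: divide_left_mono simp: tail_fun_def)
  have "1 - pgf_above p y q / P = (P - pgf_above p y q) / P"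
    using P by (simp add: field_simps)
  also have "\<dots> \<le> (real (K * M) * (1 - q) * P + tail_fun p (real (K * M))) / P"
    unfolding P_def using P(1) by (intro divide_right_mono prob_ge_minus_pgf_above_le q) (simp add: P_def)
  also have "\<dots> = real K * (real M * (1 - q)) + tail_fun p (real (K * M)) / P"
    using P by (simp add: field_simps)
  finally show ?thesis using P(2) unfolding P_def by linarith
qed

lemma ceiling_times_tendsto_0:
  fixes v :: "real \<Rightarrow> real"
  assumes v: "\<And>y. v y \<ge> 0" and lim: "((\<lambda>y. y * v y) \<longlongrightarrow> 0) at_top"
  shows "((\<lambda>y. real (nat \<lceil>y\<rceil>) * v y) \<longlongrightarrow> 0) at_top"
proof (rule tendsto_sandwich[OF _ _ tendsto_const])
  show "((\<lambda>y. 2 * (y * v y)) \<longlongrightarrow> 0) at_top"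
    using tendsto_mult_right_zero[OF lim] .
  show "eventually (\<lambda>y. 0 \<le> real (nat \<lceil>y\<rceil>) * v y) at_top"
    using v by (intro always_eventually) simp
  show "eventually (\<lambda>y. real (nat \<lceil>y\<rceil>) * v y \<le> 2 * (y * v y)) at_top"
    using eventually_ge_at_top[of 1]
  proof eventually_elim
    case (elim y)
    then have "real (nat \<lceil>y\<rceil>) \<le> 2 * y" by linarith
    from mult_right_mono[OF this v[of y]] show ?case by (simp only: mult.assoc)
  qed
qed

text \<open>Since \<open>q\<^sup>n \<approx> 1\<close> for \<open>n \<le> K \<lceil>y\<rceil>\<close>, only the tail beyond \<open>K \<lceil>y\<rceil>\<close> is lost, and regular variation
  makes it a small fraction of \<open>P(X \<ge> y)\<close> once \<open>K\<close> is large.\<close>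
lemma eventually_pgf_above_div_prob_ge_greater:
  assumes rv: "regularly_varying_seq (\<lambda>n. tail_fun p (real n)) \<alpha>"
    and q: "\<And>y. 0 \<le> q y \<and> q y \<le> 1"
    and lim: "((\<lambda>y. real (nat \<lceil>y\<rceil>) * (1 - q y)) \<longlongrightarrow> 0) at_top"
    and c: "c < 1"
  shows "eventually (\<lambda>y. c < pgf_above p y (q y) / measure_pmf.prob p {n. real n \<ge> y}) at_top"
proof -
  interpret regularly_varying_seq "\<lambda>n. tail_fun p (real n)" \<alpha> by (rule rv)
  define \<epsilon> where "\<epsilon> = 1 - c"
  have \<epsilon>: "\<epsilon> > 0" using c by (simp add: \<epsilon>_def)
  have "((\<lambda>K. real K powr (-\<alpha>)) \<longlongrightarrow> 0) sequentially"
    using index_pos by (intro tendsto_neg_powr filterlim_real_sequentially) simp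
  then have "eventually (\<lambda>K. 1 \<le> K \<and> real K powr (-\<alpha>) < \<epsilon> / 2) sequentially"
    using \<epsilon> by (intro eventually_conj eventually_ge_at_top order_tendstoD(2)) auto
  then obtain K where K: "1 \<le> K" "real K powr (-\<alpha>) < \<epsilon> / 2"
    unfolding eventually_sequentially by blast
  have "filterlim (\<lambda>y::real. nat \<lceil>y\<rceil>) sequentially at_top"
    unfolding filterlim_sequentially_iff_filterlim_real
    by (intro filterlim_at_top_mono[OF filterlim_ident] always_eventually allI) linarith
  from filterlim_compose[OF ratio_tendsto[OF K(1) order.refl] this]
  have "((\<lambda>y::real. tail_fun p (real (K * nat \<lceil>y\<rceil>)) / tail_fun p (real (nat \<lceil>y\<rceil>)))
      \<longlongrightarrow> real K powr (-\<alpha>)) at_top"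
    by simp
  then have "eventually (\<lambda>y::real. tail_fun p (real (K * nat \<lceil>y\<rceil>)) / tail_fun p (real (nat \<lceil>y\<rceil>)) < \<epsilon> / 2)
      at_top"
    using K(2) by (rule order_tendstoD(2))
  moreover have "eventually (\<lambda>y. real (nat \<lceil>y\<rceil>) * (1 - q y) < \<epsilon> / (4 * real K)) at_top"
    using order_tendstoD(2)[OF lim] \<epsilon> K(1) by simp
  ultimately show ?thesis
  proof eventually_elim
    case (elim y)
    have bound: "1 - pgf_above p y (q y) / measure_pmf.prob p {n. real n \<ge> y}
        \<le> real K * (real (nat \<lceil>y\<rceil>) * (1 - q y)) +
          tail_fun p (real (K * nat \<lceil>y\<rceil>)) / tail_fun p (real (nat \<lceil>y\<rceil>))"
      using q[of y] pos[of "nat \<lceil>y\<rceil>"] by (intro one_minus_pgf_above_div_prob_ge_le) (simp_all, linarith)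
    have "real K * (real (nat \<lceil>y\<rceil>) * (1 - q y)) \<le> \<epsilon> / 4"
      using mult_left_mono[OF less_imp_le[OF elim(2)], of "real K"] K(1) by simp
    with bound elim(1) \<epsilon> show ?case unfolding \<epsilon>_def by argo
  qed
qed

lemma pgf_above_div_prob_ge_tendsto_1:
  assumes rv: "regularly_varying_seq (\<lambda>n. tail_fun p (real n)) \<alpha>"
    and q: "\<And>y. 0 \<le> q y \<and> q y \<le> 1"
    and lim: "((\<lambda>y. y * (1 - q y)) \<longlongrightarrow> 0) at_top"
  shows "((\<lambda>y. pgf_above p y (q y) / measure_pmf.prob p {n. real n \<ge> y}) \<longlongrightarrow> 1) at_top"
proof (rule order_tendstoI)
  fix c :: real
  assume "c > 1"
  have "pgf_above p y (q y) / measure_pmf.prob p {n. real n \<ge> y} \<le> 1" for y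
    using pgf_above_le_prob_ge[of "q y" p y] q[of y] prob_ge_pos[OF regularly_varying_seq.pos[OF rv], of y]
    by simp
  with \<open>c > 1\<close> show "eventually (\<lambda>y. pgf_above p y (q y) / measure_pmf.prob p {n. real n \<ge> y} < c) at_top"
    by (intro always_eventually allI) (rule le_less_trans)
next
  fix c :: real
  assume "c < 1"
  have "((\<lambda>y. real (nat \<lceil>y\<rceil>) * (1 - q y)) \<longlongrightarrow> 0) at_top"
    using q by (intro ceiling_times_tendsto_0 lim) simp
  from eventually_pgf_above_div_prob_ge_greater[where q = q, OF rv q this \<open>c < 1\<close>]
  show "eventually (\<lambda>y. c < pgf_above p y (q y) / measure_pmf.prob p {n. real n \<ge> y}) at_top" .
qed

lemma GW_max_lt_prob_deficit_eq:
  assumes crit: "critical_law p" and var: "summable (\<lambda>n. (real n)\<^sup>2 * pmf p n)"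
  shows "(1 - GW_max_lt_prob p 1 y)\<^sup>2 * pgf_second_order_rem p (1 - GW_max_lt_prob p 1 y)
         = pgf_above p y (GW_max_lt_prob p 1 y)"
  using crit GW_max_lt_prob_fixpoint GW_max_lt_prob_nonneg GW_max_lt_prob_le_1[of 1]
  by (intro pgf_second_order_rem_fixpoint var) (auto simp: critical_law_def)

lemma GW_deficit_times_level_tendsto_0:
  assumes crit: "critical_law p" and var: "summable (\<lambda>n. (real n)\<^sup>2 * pmf p n)"
  shows "((\<lambda>y. y * (1 - GW_max_lt_prob p 1 y)) \<longlongrightarrow> 0) at_top"
proof -
  define u where "u y = 1 - GW_max_lt_prob p 1 y" for y
  have u: "0 \<le> u y" "u y \<le> 1" for y
    using GW_max_lt_prob_nonneg GW_max_lt_prob_le_1[of 1] unfolding u_def by auto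
  obtain n0 where n0: "n0 \<ge> 2" "pmf p n0 > 0"
    using critical_law_ex_pmf_ge_2[OF crit] by auto
  have u_sq: "(u y)\<^sup>2 * pmf p n0 \<le> measure_pmf.prob p {n. real n \<ge> y}" for y
  proof -
    have "(u y)\<^sup>2 * pmf p n0 \<le> (u y)\<^sup>2 * pgf_second_order_rem p (u y)"
      using pgf_second_order_rem_ge_pmf[OF var u n0(1)] by (simp add: mult_left_mono)
    also have "\<dots> \<le> measure_pmf.prob p {n. real n \<ge> y}"
      unfolding u_def GW_max_lt_prob_deficit_eq[OF crit var]
      using GW_max_lt_prob_nonneg GW_max_lt_prob_le_1[of 1] by (intro pgf_above_le_prob_ge) auto
    finally show ?thesis .
  qed
  have "((\<lambda>y. sqrt (y\<^sup>2 * measure_pmf.prob p {n. real n \<ge> y} / pmf p n0)) \<longlongrightarrow> sqrt (0 / pmf p n0)) at_top"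
    using n0(2) by (intro tendsto_intros square_prob_ge_tendsto_0[OF var]) simp
  then have upper_lim: "((\<lambda>y. sqrt (y\<^sup>2 * measure_pmf.prob p {n. real n \<ge> y} / pmf p n0)) \<longlongrightarrow> 0) at_top"
    by simp
  have le: "eventually (\<lambda>y. y * u y \<le> sqrt (y\<^sup>2 * measure_pmf.prob p {n. real n \<ge> y} / pmf p n0)) at_top"
    using eventually_ge_at_top[of 0]
  proof eventually_elim
    case (elim y)
    have "(y * u y)\<^sup>2 \<le> y\<^sup>2 * measure_pmf.prob p {n. real n \<ge> y} / pmf p n0"
      using mult_left_mono[OF u_sq[of y], of "y\<^sup>2"] n0(2)
      by (simp add: pos_le_divide_eq power_mult_distrib mult.assoc)
    then have "sqrt ((y * u y)\<^sup>2) \<le> sqrt (y\<^sup>2 * measure_pmf.prob p {n. real n \<ge> y} / pmf p n0)"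
      by (rule real_sqrt_le_mono)
    then show ?case
      using elim u[of y] by simp
  qed
  have nonneg: "eventually (\<lambda>y. 0 \<le> y * u y) at_top"
    using eventually_ge_at_top[of 0] by eventually_elim (use u in simp)
  from tendsto_sandwich[OF nonneg le tendsto_const upper_lim] show ?thesis
    unfolding u_def .
qed

lemma GW_deficit_asymptotic:
  assumes crit: "critical_law p" and var: "summable (\<lambda>n. (real n)\<^sup>2 * pmf p n)"
    and rv: "regularly_varying_seq (\<lambda>n. tail_fun p (real n)) \<alpha>"
  shows "((\<lambda>y. (1 - GW_max_lt_prob p 1 y)\<^sup>2 / measure_pmf.prob p {n. real n \<ge> y})
           \<longlongrightarrow> 2 / ((\<Sum>n. (real n)\<^sup>2 * pmf p n) - 1)) at_top"
proof -
  define q where "q y = GW_max_lt_prob p 1 y" for y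
  define P where "P y = measure_pmf.prob p {n. real n \<ge> y}" for y
  have q: "0 \<le> q y \<and> q y \<le> 1" for y
    using GW_max_lt_prob_nonneg GW_max_lt_prob_le_1[of 1] unfolding q_def by auto
  have P: "P y > 0" for y
    unfolding P_def by (rule prob_ge_pos[OF regularly_varying_seq.pos[OF rv]])
  have level: "((\<lambda>y. y * (1 - q y)) \<longlongrightarrow> 0) at_top"
    unfolding q_def by (rule GW_deficit_times_level_tendsto_0[OF crit var])
  have "((\<lambda>y. y * (1 - q y) * (1 / y)) \<longlongrightarrow> 0) at_top"
    using tendsto_mult[OF level tendsto_divide_0[OF tendsto_const
        filterlim_at_top_imp_at_infinity[OF filterlim_ident]]] unfolding mult_zero_left .
  then have "((\<lambda>y. 1 - q y) \<longlongrightarrow> 0) at_top"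
    by (rule Lim_transform_eventually) (use eventually_gt_at_top[of 0] in \<open>eventually_elim, simp\<close>)
  then have rem: "((\<lambda>y. pgf_second_order_rem p (1 - q y)) \<longlongrightarrow> pgf_second_order_rem p 0) at_top"
    using q by (intro tendsto_pgf_second_order_rem var always_eventually) auto
  obtain n0 where n0: "n0 \<ge> 2" "pmf p n0 > 0"
    using critical_law_ex_pmf_ge_2[OF crit] by auto
  have rem_pos: "pgf_second_order_rem p (1 - q y) > 0" "pgf_second_order_rem p 0 > 0" for y
    using pgf_second_order_rem_ge_pmf[OF var _ _ n0(1)] n0(2) q[of y] by (auto intro: less_le_trans)
  have "((\<lambda>y. pgf_above p y (q y) / P y / pgf_second_order_rem p (1 - q y))
          \<longlongrightarrow> 1 / pgf_second_order_rem p 0) at_top"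
    unfolding P_def
    using pgf_above_div_prob_ge_tendsto_1[OF rv q level] rem rem_pos(2)
    by (intro tendsto_divide) auto
  moreover have "pgf_above p y (q y) / P y / pgf_second_order_rem p (1 - q y) = (1 - q y)\<^sup>2 / P y" for y
    using GW_max_lt_prob_deficit_eq[OF crit var, of y] rem_pos(1)[of y] P[of y]
    by (simp add: q_def field_simps)
  moreover have "(\<Sum>n. (real n)\<^sup>2 * pmf p n) - 1 = 2 * pgf_second_order_rem p 0"
    using pgf_second_order_rem_0[OF var] crit by (simp add: critical_law_def)
  then have "1 / pgf_second_order_rem p 0 = 2 / ((\<Sum>n. (real n)\<^sup>2 * pmf p n) - 1)"
    by simp
  ultimately show ?thesis unfolding q_def P_def by simp
qed

lemma prob_ge_div_tail_fun_tendsto: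
  assumes rv: "regularly_varying_seq (\<lambda>n. tail_fun p (real n)) \<alpha>"
    and t: "filterlim t at_top F" and x: "x > 0"
  shows "((\<lambda>k. measure_pmf.prob p {n. real n \<ge> x * t k} / tail_fun p (t k)) \<longlongrightarrow> x powr (-\<alpha>)) F"
proof -
  interpret regularly_varying_seq "\<lambda>n. tail_fun p (real n)" \<alpha> by (rule rv)
  have t_pos: "eventually (\<lambda>k. t k > 0) F"
    using t by (simp add: filterlim_at_top_dense)
  have "((\<lambda>k. x * t k / t k) \<longlongrightarrow> x) F"
    by (rule Lim_transform_eventually[OF tendsto_const]) (use t_pos in \<open>eventually_elim, simp\<close>)
  then have lower: "((\<lambda>k. tail_fun p (real (nat \<lfloor>x * t k\<rfloor>)) / tail_fun p (real (nat \<lfloor>t k\<rfloor>)))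
      \<longlongrightarrow> x powr (-\<alpha>)) F"
    by (rule tendsto_floor_ratio[OF t _ x])
  have "((\<lambda>k. x - 1 / t k) \<longlongrightarrow> x - 0) F"
    by (intro tendsto_intros tendsto_divide_0[OF tendsto_const] filterlim_at_top_imp_at_infinity t)
  then have "((\<lambda>k. x - 1 / t k) \<longlongrightarrow> x) F" by simp
  then have "((\<lambda>k. (x * t k - 1) / t k) \<longlongrightarrow> x) F"
    by (rule Lim_transform_eventually) (use t_pos in \<open>eventually_elim, simp add: diff_divide_distrib\<close>)
  then have upper: "((\<lambda>k. tail_fun p (real (nat \<lfloor>x * t k - 1\<rfloor>)) / tail_fun p (real (nat \<lfloor>t k\<rfloor>)))
      \<longlongrightarrow> x powr (-\<alpha>)) F"
    by (rule tendsto_floor_ratio[OF t _ x])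
  have xt: "eventually (\<lambda>k. x * t k \<ge> 1 \<and> t k \<ge> 0) F"
    using filterlim_tendsto_pos_mult_at_top[OF tendsto_const x t] t
    by (intro eventually_conj) (simp_all add: filterlim_at_top)
  show ?thesis
  proof (rule tendsto_sandwich[OF _ _ lower upper])
    show "eventually (\<lambda>k. tail_fun p (real (nat \<lfloor>x * t k\<rfloor>)) / tail_fun p (real (nat \<lfloor>t k\<rfloor>))
        \<le> measure_pmf.prob p {n. real n \<ge> x * t k} / tail_fun p (t k)) F"
      using xt
    proof eventually_elim
      case (elim k)
      then have "0 \<le> x * t k" "0 \<le> t k" by auto
      then show ?case
        unfolding tail_fun_nat_floor[OF \<open>0 \<le> x * t k\<close>] tail_fun_nat_floor[OF \<open>0 \<le> t k\<close>]
        by (intro divide_right_mono tail_fun_le_prob_ge) (simp add: tail_fun_def)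
    qed
    show "eventually (\<lambda>k. measure_pmf.prob p {n. real n \<ge> x * t k} / tail_fun p (t k)
        \<le> tail_fun p (real (nat \<lfloor>x * t k - 1\<rfloor>)) / tail_fun p (real (nat \<lfloor>t k\<rfloor>))) F"
      using xt
    proof eventually_elim
      case (elim k)
      then have "0 \<le> x * t k - 1" "0 \<le> t k" by auto
      then show ?case
        unfolding tail_fun_nat_floor[OF \<open>0 \<le> x * t k - 1\<close>] tail_fun_nat_floor[OF \<open>0 \<le> t k\<close>]
        by (intro divide_right_mono prob_ge_le_tail_fun) (simp add: tail_fun_def)
    qed
  qed
qed

lemma prob_ge_scaled_asymptotic:
  fixes a t :: "'a \<Rightarrow> real"
  assumes rv: "regularly_varying_seq (\<lambda>n. tail_fun p (real n)) \<alpha>"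
    and a: "filterlim a at_top F" and lim: "((\<lambda>k. a k * tail_fun p (t k)) \<longlongrightarrow> 1) F"
    and t: "eventually (\<lambda>k. t k \<ge> 0) F" and x: "x > 0"
  shows "filterlim t at_top F"
    and "((\<lambda>k. a k * measure_pmf.prob p {n. real n \<ge> x * t k}) \<longlongrightarrow> x powr (-\<alpha>)) F"
proof -
  interpret regularly_varying_seq "\<lambda>n. tail_fun p (real n)" \<alpha> by (rule rv)
  have a_pos: "eventually (\<lambda>k. a k > 0) F"
    using a by (simp add: filterlim_at_top_dense)
  have "((\<lambda>k. a k * tail_fun p (t k) * (1 / a k)) \<longlongrightarrow> 0) F"
    using tendsto_mult[OF lim tendsto_divide_0[OF tendsto_const filterlim_at_top_imp_at_infinity[OF a]]]
    unfolding mult_zero_right .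
  moreover have "eventually (\<lambda>k. a k * tail_fun p (t k) * (1 / a k) = tail_fun p (real (nat \<lfloor>t k\<rfloor>))) F"
    using a_pos t
  proof eventually_elim
    case (elim k)
    then show ?case using tail_fun_nat_floor[of "t k" p] by simp
  qed
  ultimately have "((\<lambda>k. tail_fun p (real (nat \<lfloor>t k\<rfloor>))) \<longlongrightarrow> 0) F"
    by (rule Lim_transform_eventually)
  then show t_top: "filterlim t at_top F"
    by (rule filterlim_at_top_if_tendsto_0)
  have "((\<lambda>k. a k * tail_fun p (t k) * (measure_pmf.prob p {n. real n \<ge> x * t k} / tail_fun p (t k)))
          \<longlongrightarrow> 1 * x powr (-\<alpha>)) F"
    by (intro tendsto_mult lim prob_ge_div_tail_fun_tendsto[OF rv t_top x])
  moreover have "eventually (\<lambda>k. a k * tail_fun p (t k) * (measure_pmf.prob p {n. real n \<ge> x * t k} /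
      tail_fun p (t k)) = a k * measure_pmf.prob p {n. real n \<ge> x * t k}) F"
    using t
  proof eventually_elim
    case (elim k)
    then show ?case using tail_fun_nat_floor[of "t k" p] pos[of "nat \<lfloor>t k\<rfloor>"] by simp
  qed
  ultimately show "((\<lambda>k. a k * measure_pmf.prob p {n. real n \<ge> x * t k}) \<longlongrightarrow> x powr (-\<alpha>)) F"
    by (simp add: Lim_transform_eventually)
qed

theorem GW_max_lt_prob_tendsto:
  assumes crit: "critical_law p" and var: "summable (\<lambda>n. (real n)\<^sup>2 * pmf p n)"
    and rv: "regularly_varying_seq (\<lambda>n. tail_fun p (real n)) \<alpha>"
    and y: "filterlim y at_top sequentially"
    and lim: "((\<lambda>k. (real k)\<^sup>2 * measure_pmf.prob p {n. real n \<ge> y k}) \<longlongrightarrow> c) sequentially"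
    and c: "c \<ge> 0"
  shows "((\<lambda>k. GW_max_lt_prob p k (y k))
           \<longlongrightarrow> exp (- sqrt (2 * c / ((\<Sum>n. (real n)\<^sup>2 * pmf p n) - 1)))) sequentially"
proof -
  define u where "u k = 1 - GW_max_lt_prob p 1 (y k)" for k
  have u: "0 \<le> u k" for k
    using GW_max_lt_prob_le_1[of 1] unfolding u_def by simp
  have "((\<lambda>k. (real k)\<^sup>2 * measure_pmf.prob p {n. real n \<ge> y k} *
           ((1 - GW_max_lt_prob p 1 (y k))\<^sup>2 / measure_pmf.prob p {n. real n \<ge> y k}))
         \<longlongrightarrow> c * (2 / ((\<Sum>n. (real n)\<^sup>2 * pmf p n) - 1))) sequentially"
    by (intro tendsto_mult lim filterlim_compose[OF GW_deficit_asymptotic[OF crit var rv] y])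
  moreover have "(real k)\<^sup>2 * measure_pmf.prob p {n. real n \<ge> y k} *
      ((1 - GW_max_lt_prob p 1 (y k))\<^sup>2 / measure_pmf.prob p {n. real n \<ge> y k}) = (real k * u k)\<^sup>2" for k
    using prob_ge_pos[OF regularly_varying_seq.pos[OF rv], of "y k"]
    by (simp add: u_def power_mult_distrib)
  ultimately have "((\<lambda>k. (real k * u k)\<^sup>2) \<longlongrightarrow> 2 * c / ((\<Sum>n. (real n)\<^sup>2 * pmf p n) - 1)) sequentially"
    by (simp add: ac_simps)
  then have "((\<lambda>k. sqrt ((real k * u k)\<^sup>2)) \<longlongrightarrow> sqrt (2 * c / ((\<Sum>n. (real n)\<^sup>2 * pmf p n) - 1)))
      sequentially"
    by (rule tendsto_real_sqrt)
  then have "((\<lambda>k. real k * u k) \<longlongrightarrow> sqrt (2 * c / ((\<Sum>n. (real n)\<^sup>2 * pmf p n) - 1))) sequentially"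
    using u by simp
  then have "((\<lambda>k. (1 - u k) ^ k) \<longlongrightarrow> exp (- sqrt (2 * c / ((\<Sum>n. (real n)\<^sup>2 * pmf p n) - 1)))) sequentially"
    by (rule tendsto_one_minus_power[OF u])
  moreover have "eventually (\<lambda>k. (1 - u k) ^ k = GW_max_lt_prob p k (y k)) sequentially"
    using eventually_ge_at_top[of 1]
  proof eventually_elim
    case (elim k)
    then show ?case using GW_max_lt_prob_power[of k p "y k"] by (simp add: u_def)
  qed
  ultimately show ?thesis
    by (rule Lim_transform_eventually)
qed

theorem theorem1:
  fixes p :: "nat pmf" and l :: "real \<Rightarrow> real" and \<alpha> \<sigma> :: real
    and \<phi> :: "real \<Rightarrow> real"
  assumes crit: "critical_law p"
    and tail: "\<And>n::nat. n \<ge> 1 \<Longrightarrow> tail_fun p (real n) = real n powr (-\<alpha>) * l (real n)"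
    and sv: "slowly_varying l"
    and alpha: "\<alpha> > 2"
    and phi_pos: "\<And>\<epsilon>. 0 < \<epsilon> \<Longrightarrow> \<epsilon> < 1 \<Longrightarrow> \<phi> \<epsilon> \<ge> 0"
    and phi_inv: "((\<lambda>\<epsilon>. tail_fun p (\<phi> \<epsilon>) / \<epsilon>) \<longlongrightarrow> 1) (at_right 0)"
    and var_summable: "summable (\<lambda>n. (real n)\<^sup>2 * pmf p n)"
    and sigma: "\<sigma> > 0" "\<sigma>\<^sup>2 = (\<Sum>n. (real n)\<^sup>2 * pmf p n) - 1"
    and x: "x > 0"
  shows "(\<lambda>k. GW_max_lt_prob p k (x * \<phi> (1 / (real k)\<^sup>2)))
           \<longlonglongrightarrow> exp (- (sqrt 2 / \<sigma>) * x powr (- \<alpha> / 2))"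
proof -
  \<comment> \<open>\<open>\<alpha> > 2\<close> matters only through the finite variance, which is assumed separately.\<close>
  have "\<alpha> > 0" using alpha by simp
  with tail sv have rv: "regularly_varying_seq (\<lambda>n. tail_fun p (real n)) \<alpha>"
    by (rule regularly_varying_seq_tail_fun)
  have "filterlim (\<lambda>k::nat. 1 / (real k)\<^sup>2) (at_right 0) sequentially"
    by real_asymp
  from filterlim_compose[OF phi_inv this]
  have scale: "((\<lambda>k. (real k)\<^sup>2 * tail_fun p (\<phi> (1 / (real k)\<^sup>2))) \<longlongrightarrow> 1) sequentially"
    by (simp add: mult.commute)
  have "eventually (\<lambda>k::nat. \<phi> (1 / (real k)\<^sup>2) \<ge> 0) sequentially"
    using eventually_gt_at_top[of "1::nat"] by eventually_elim (intro phi_pos, auto)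
  moreover have "filterlim (\<lambda>k::nat. (real k)\<^sup>2) at_top sequentially"
    by real_asymp
  ultimately have level: "filterlim (\<lambda>k. \<phi> (1 / (real k)\<^sup>2)) at_top sequentially"
    "((\<lambda>k. (real k)\<^sup>2 * measure_pmf.prob p {n. real n \<ge> x * \<phi> (1 / (real k)\<^sup>2)}) \<longlongrightarrow> x powr (-\<alpha>))
      sequentially"
    using prob_ge_scaled_asymptotic[OF rv _ scale _ x] by blast+
  have "filterlim (\<lambda>k. x * \<phi> (1 / (real k)\<^sup>2)) at_top sequentially"
    by (rule filterlim_tendsto_pos_mult_at_top[OF tendsto_const x level(1)])
  from GW_max_lt_prob_tendsto[OF crit var_summable rv this level(2)] x
  have "(\<lambda>k. GW_max_lt_prob p k (x * \<phi> (1 / (real k)\<^sup>2)))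
          \<longlonglongrightarrow> exp (- sqrt (2 * x powr (-\<alpha>) / \<sigma>\<^sup>2))"
    by (simp add: sigma(2))
  moreover have "sqrt (2 * x powr (-\<alpha>) / \<sigma>\<^sup>2) = sqrt 2 / \<sigma> * x powr (- \<alpha> / 2)"
    using sigma(1) x by (simp add: real_sqrt_mult real_sqrt_divide powr_half_sqrt_powr[symmetric])
  ultimately show ?thesis by simp
qed

end
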